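(* Let $\mathsf Y=\mathsf Y_1\times\cdots\times\mathsf Y_L$ be a product of Euclidean spaces and let $S:\mathsf Y\to\mathsf Y$ be a firmly non-expansive operator with domain $\mathsf Y$, written $S(\zeta)=(S_1(\zeta),\dots,S_L(\zeta))$ with $S_\ell(\zeta)\in\mathsf Y_\ell$. For $\ell=1,\dots,L$ define $\hat S_\ell:\mathsf Y\to\mathsf Y$ by $$\hat S_\ell(\zeta)=(\zeta_1,\dots,\zeta_{\ell-1},S_\ell(\zeta),\zeta_{\ell+1},\dots,\zeta_L).$$ Let $(\xi^k)_{k\ge1}$ be i.i.d. random variables on a probability space, valued in $\{1,\dots,L\}$, with $\mathbb P[\xi^1=\ell]=p_\ell>0$ for all $\ell$. Assume the fixed point set $\mathrm{fix}(S)$ is nonempty. Then for any initial value $\zeta^0\in\mathsf Y$, the sequence $\zeta^{k+1}=\hat S_{\xi^{k+1}}(\zeta^k)$ converges almost surely to a random variable taking values in $\mathrm{fix}(S)$.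
   Context: An operator $S$ on a Euclidean space $\mathsf Y$ is firmly non-expansive if $\langle x-x',S(x)-S(x')\rangle\ge\|S(x)-S(x')\|^2$ for all $x,x'$ (in particular it is single valued). $\mathrm{fix}(S)=\{\zeta:S(\zeta)=\zeta\}$. *)

theory Defs
  imports "HOL-Analysis.Analysis" "HOL-Probability.Probability"
begin

text \<open>The product space Y = Y_1 x ... x Y_L: blocks are indexed by a finite type 'i
  (L = CARD('i)); block l is the Euclidean space Y_l, modelled as a linear subspace
  V l of a Euclidean space 'a.  Elements of Y are vectors z :: 'a^'i with z$l in V l;
  the inner product on 'a^'i is the sum of the blockwise inner products.\<close>

definition prod_space :: "('i::finite \<Rightarrow> ('a::euclidean_space) set) \<Rightarrow> ('a^'i) set" where
  "prod_space V = {z. \<forall>l. z $ l \<in> V l}"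

definition firmly_nonexpansive_on :: "'b::real_inner set \<Rightarrow> ('b \<Rightarrow> 'b) \<Rightarrow> bool" where
  "firmly_nonexpansive_on Y S \<longleftrightarrow>
     (\<forall>x\<in>Y. \<forall>x'\<in>Y. inner (x - x') (S x - S x') \<ge> (norm (S x - S x'))\<^sup>2)"

definition fixset :: "'b set \<Rightarrow> ('b \<Rightarrow> 'b) \<Rightarrow> 'b set" where
  "fixset Y S = {z\<in>Y. S z = z}"

definition S_hat :: "('a^'i \<Rightarrow> 'a^'i) \<Rightarrow> 'i::finite \<Rightarrow> 'a^'i \<Rightarrow> 'a^'i" where
  "S_hat S l z = (\<chi> j. if j = l then S z $ l else z $ j)"

primrec rbc_iter :: "('a^'i \<Rightarrow> 'a^'i) \<Rightarrow> (nat \<Rightarrow> 'm \<Rightarrow> 'i::finite) \<Rightarrow> 'a^'i \<Rightarrow> nat \<Rightarrow> 'm \<Rightarrow> 'a^'i" where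
  "rbc_iter S xi z0 0 w = z0"
| "rbc_iter S xi z0 (Suc k) w = S_hat S (xi (Suc k) w) (rbc_iter S xi z0 k w)"

end

theory Submission
  imports Defs
begin

text \<open>Weight block \<open>l\<close> by \<open>1 / p l\<close>: in the norm \<open>\<Sum>l. \<parallel>v $ l\<parallel>\<^sup>2 / p l\<close> the expected
  effect of a random block update equals that of the full operator \<open>S\<close>. Firm nonexpansiveness then makes, for every
  fixed point \<open>d\<close>, the weighted squared distance from the iterate to \<open>d\<close> plus the accumulated squared
  residuals \<open>\<parallel>S \<zeta> - \<zeta>\<parallel>\<^sup>2\<close> a nonnegative supermartingale. Such supermartingales converge almost
  surely (proved here from Ville's maximal inequality and Dubins' upcrossing inequality), so
  almost surely the residuals tend to zero and the distances to all points of a countable dense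
  subset of the fixed point set converge. Boundedness gives a cluster point, which is a fixed
  point because the residuals vanish, and Opial's argument shows that the whole sequence
  converges to it.\<close>

section \<open>Upcrossings of real sequences\<close>

fun has_upcrossings :: "(nat \<Rightarrow> real) \<Rightarrow> real \<Rightarrow> real \<Rightarrow> nat \<Rightarrow> nat \<Rightarrow> nat \<Rightarrow> bool" where
  "has_upcrossings x a b 0 n N = True"
| "has_upcrossings x a b (Suc j) n N =
     (\<exists>k. n \<le> k \<and> k \<le> N \<and> x k \<le> a \<and>
        (\<exists>k'. k \<le> k' \<and> k' \<le> N \<and> b \<le> x k' \<and> has_upcrossings x a b j k' N))"

lemma has_upcrossings_start_antimono:
  "has_upcrossings x a b j n N \<Longrightarrow> n' \<le> n \<Longrightarrow> has_upcrossings x a b j n' N"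
  by (cases j) (auto, meson order_trans)

lemma has_upcrossings_end_mono:
  "has_upcrossings x a b j n N \<Longrightarrow> N \<le> N' \<Longrightarrow> has_upcrossings x a b j n N'"
  by (induction j arbitrary: n) (auto, meson order_trans)

lemma has_upcrossings_cong:
  assumes "\<And>k. k \<le> N \<Longrightarrow> x k = y k"
  shows "has_upcrossings x a b j n N = has_upcrossings y a b j n N"
proof (induction j arbitrary: n)
  case (Suc j)
  have "(k \<le> N \<and> x k \<le> a) = (k \<le> N \<and> y k \<le> a)" "(k' \<le> N \<and> b \<le> x k') = (k' \<le> N \<and> b \<le> y k')"
    for k k' using assms by auto
  then show ?case by (simp only: has_upcrossings.simps Suc.IH conj_assoc[symmetric])
qed simp

lemma has_upcrossings_if_oscillating:
  assumes lo: "\<And>m. \<exists>n\<ge>m. x n \<le> a" and hi: "\<And>m. \<exists>n\<ge>m. b \<le> x n"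
  shows "\<exists>N. has_upcrossings x a b j n N"
proof (induction j arbitrary: n)
  case 0 then show ?case by simp
next
  case (Suc j)
  obtain k where k: "n \<le> k" "x k \<le> a" using lo by blast
  obtain k' where k': "k \<le> k'" "b \<le> x k'" using hi by blast
  obtain N where "has_upcrossings x a b j k' N" using Suc by blast
  then have "has_upcrossings x a b j k' (max N k')" by (rule has_upcrossings_end_mono) simp
  moreover have "k \<le> max N k'" "k' \<le> max N k'" using k' by auto
  ultimately have "has_upcrossings x a b (Suc j) n (max N k')"
    using k k' by (simp only: has_upcrossings.simps) blast
  then show ?case by blast
qed

lemma oscillating_if_not_convergent:
  fixes x :: "nat \<Rightarrow> real"
  assumes nonneg: "\<And>k. 0 \<le> x k" and bounded: "\<And>k. x k \<le> B" and "\<not> convergent x"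
  obtains a b :: rat where "0 \<le> a" "a < b"
    "\<And>m. \<exists>n\<ge>m. x n \<le> of_rat a" "\<And>m. \<exists>n\<ge>m. of_rat b \<le> x n"
proof -
  have "0 \<le> liminf x" using nonneg by (intro Liminf_bounded) auto
  moreover have "limsup x \<le> B" using bounded by (intro Limsup_bounded) auto
  moreover have "liminf x \<le> limsup x" by (rule Liminf_le_Limsup) simp
  ultimately obtain l1 l2 where l1: "liminf x = ereal l1" and l2: "limsup x = ereal l2"
    by (cases "liminf x"; cases "limsup x") auto
  have "l1 < l2"
  proof (rule ccontr)
    assume "\<not> l1 < l2"
    then have "limsup x \<le> liminf x" using l1 l2 by simp
    with l2 have "x \<longlonglongrightarrow> l2" by (intro limsup_le_liminf_real) auto
    then show False using \<open>\<not> convergent x\<close> by (auto simp: convergent_def)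
  qed
  then obtain a where a: "a \<in> \<rat>" "l1 < a" "a < l2" using Rats_dense_in_real by blast
  then obtain b where b: "b \<in> \<rat>" "a < b" "b < l2" using Rats_dense_in_real by blast
  obtain qa qb where qa: "a = of_rat qa" and qb: "b = of_rat qb" using a(1) b(1) Rats_cases by metis
  have "0 \<le> l1" using \<open>0 \<le> liminf x\<close> l1 by simp
  with a b qa qb have "(0::real) \<le> of_rat qa" "(of_rat qa::real) < of_rat qb" by linarith+
  then have "0 \<le> qa" "qa < qb" by (simp_all add: of_rat_less)
  moreover have "\<exists>n\<ge>m. x n \<le> of_rat qa" for m
  proof (rule ccontr)
    assume "\<not> (\<exists>n\<ge>m. x n \<le> of_rat qa)"
    then have "eventually (\<lambda>n. ereal a \<le> ereal (x n)) sequentially"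
      by (auto simp: qa eventually_sequentially intro!: exI[of _ m])
    then have "ereal a \<le> liminf x" by (intro Liminf_bounded)
    then show False using a l1 by simp
  qed
  moreover have "\<exists>n\<ge>m. of_rat qb \<le> x n" for m
  proof (rule ccontr)
    assume "\<not> (\<exists>n\<ge>m. of_rat qb \<le> x n)"
    then have "eventually (\<lambda>n. ereal (x n) \<le> ereal b) sequentially"
      by (auto simp: qb eventually_sequentially intro!: exI[of _ m])
    then have "limsup x \<le> ereal b" by (intro Limsup_bounded)
    then show False using b l2 by simp
  qed
  ultimately show ?thesis by (rule that)
qed

lemma convergent_if_no_rational_upcrossings:
  fixes x :: "nat \<Rightarrow> real"
  assumes "\<And>k. 0 \<le> x k" and "\<And>k. x k \<le> B"
    and no_up: "\<And>a b::rat. 0 \<le> a \<Longrightarrow> a < b \<Longrightarrow>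
      \<exists>j. \<forall>N. \<not> has_upcrossings x (of_rat a) (of_rat b) j 0 N"
  shows "convergent x"
proof (rule ccontr)
  assume "\<not> convergent x"
  with assms(1,2) obtain a b :: rat where "0 \<le> a" "a < b"
    and "\<And>m. \<exists>n\<ge>m. x n \<le> of_rat a" "\<And>m. \<exists>n\<ge>m. of_rat b \<le> x n"
    by (rule oscillating_if_not_convergent) (rule that)
  with no_up has_upcrossings_if_oscillating show False by metis
qed

section \<open>Nonnegative supermartingales driven by i.i.d. indices\<close>

text \<open>Histories are lists with the most recent index first, so \<open>l # s\<close> extends \<open>s\<close> by one step
  with next index \<open>l\<close>; \<open>p l\<close> is the probability of that index.\<close>

definition nonneg_supermartingale :: "('i::finite \<Rightarrow> real) \<Rightarrow> ('i list \<Rightarrow> real) \<Rightarrow> bool" where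
  "nonneg_supermartingale p f \<longleftrightarrow> (\<forall>s. 0 \<le> f s \<and> (\<Sum>l\<in>UNIV. p l * f (l # s)) \<le> f s)"

lemma nonneg_supermartingaleD:
  assumes "nonneg_supermartingale p f"
  shows "0 \<le> f s" and "(\<Sum>l\<in>UNIV. p l * f (l # s)) \<le> f s"
  using assms by (auto simp: nonneg_supermartingale_def)

context prob_space
begin

lemma prob_incseq_UN_le:
  assumes "incseq A" "\<And>N. A N \<in> sets M" "\<And>N. prob (A N) \<le> c"
  shows "prob (\<Union>N. A N) \<le> c"
  using assms by (intro LIMSEQ_le_const2[OF finite_Lim_measure_incseq]) auto

lemma AE_not_in_if_prob_le_null_seq:
  assumes "U \<in> sets M" "c \<longlonglongrightarrow> 0" "\<And>n. prob U \<le> c n"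
  shows "AE w in M. w \<notin> U"
proof -
  have "prob U \<le> 0" using assms(2,3) by (intro LIMSEQ_le_const) auto
  then have "U \<in> null_sets M"
    using assms(1) measure_nonneg[of M U] by (simp add: null_sets_def emeasure_eq_measure)
  then show ?thesis by (rule AE_not_in)
qed

lemma measurable_limit_in_set:
  fixes X :: "nat \<Rightarrow> 'a \<Rightarrow> 'b::{banach, second_countable_topology}"
  assumes X: "\<And>k. X k \<in> borel_measurable M"
    and AE: "AE w in M. \<exists>u\<in>F. (\<lambda>k. X k w) \<longlonglongrightarrow> u" and "u0 \<in> F"
  shows "\<exists>Z. Z \<in> borel_measurable M \<and> (\<forall>w\<in>space M. Z w \<in> F) \<and>
    (AE w in M. (\<lambda>k. X k w) \<longlonglongrightarrow> Z w)"
proof -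
  from AE obtain N where "{w \<in> space M. \<not> (\<exists>u\<in>F. (\<lambda>k. X k w) \<longlonglongrightarrow> u)} \<subseteq> N"
    and "emeasure M N = 0" "N \<in> sets M"
    by (rule AE_E)
  then have N: "{w \<in> space M. \<not> (\<exists>u\<in>F. (\<lambda>k. X k w) \<longlonglongrightarrow> u)} \<subseteq> N" "N \<in> null_sets M"
    by (simp_all add: null_sets_def)
  define Z where "Z w = (if w \<in> space M - N then lim (\<lambda>k. X k w) else u0)" for w
  have good: "(\<lambda>k. X k w) \<longlonglongrightarrow> Z w \<and> Z w \<in> F" if "w \<in> space M - N" for w
    using that N(1) by (auto simp: Z_def limI)
  have "Z \<in> borel_measurable M"
    unfolding Z_def using N(2) by (intro measurable_If_set borel_measurable_lim_metric X) auto
  moreover have "\<forall>w\<in>space M. Z w \<in> F" using good \<open>u0 \<in> F\<close> by (auto simp: Z_def)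
  moreover have "AE w in M. (\<lambda>k. X k w) \<longlonglongrightarrow> Z w"
    using AE_not_in[OF N(2)] AE_space by eventually_elim (use good in auto)
  ultimately show ?thesis by blast
qed

end

locale finite_iid_sequence = prob_space M for M :: "'m measure" +
  fixes xi :: "nat \<Rightarrow> 'm \<Rightarrow> 'i::finite"
  assumes xi_measurable: "\<And>k. k \<ge> 1 \<Longrightarrow> xi k \<in> measurable M (count_space UNIV)"
    and xi_indep: "indep_vars (\<lambda>_. count_space UNIV) xi {1..}"
    and xi_ident: "\<And>k. k \<ge> 1 \<Longrightarrow> distr M (count_space UNIV) (xi k) = distr M (count_space UNIV) (xi 1)"
begin

primrec history :: "nat \<Rightarrow> 'm \<Rightarrow> 'i list" where
  "history 0 w = []"
| "history (Suc k) w = xi (Suc k) w # history k w"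

definition cylinder :: "'i list \<Rightarrow> 'm set" where
  "cylinder s = {w \<in> space M. history (length s) w = s}"

definition p :: "'i \<Rightarrow> real" where
  "p l = prob {w \<in> space M. xi 1 w = l}"

lemma length_history [simp]: "length (history k w) = k"
  by (induction k) auto

lemma history_eq_drop: "k \<le> N \<Longrightarrow> history k w = drop (N - k) (history N w)"
proof (induction N)
  case (Suc N)
  then show ?case by (cases "k = Suc N") (auto simp: Suc_diff_le)
qed simp

lemma nth_history: "i < k \<Longrightarrow> history k w ! i = xi (k - i) w"
  by (induction k arbitrary: i) (auto simp: nth_Cons split: nat.split)

lemma sets_xi_eq: "k \<ge> 1 \<Longrightarrow> {w \<in> space M. xi k w = l} \<in> sets M"
  using measurable_sets[OF xi_measurable, of k "{l}"] by (simp add: vimage_def Int_def conj_commute)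

lemma cylinder_Nil [simp]: "cylinder [] = space M"
  by (simp add: cylinder_def)

lemma cylinder_Cons: "cylinder (l # s) = cylinder s \<inter> {w \<in> space M. xi (Suc (length s)) w = l}"
  by (auto simp: cylinder_def)

lemma sets_cylinder [measurable]: "cylinder s \<in> sets M"
  by (induction s) (auto simp: cylinder_Cons intro!: sets_xi_eq)

lemma prob_xi_eq: "k \<ge> 1 \<Longrightarrow> prob {w \<in> space M. xi k w = l} = p l"
proof -
  have *: "prob {w \<in> space M. xi j w = l} = measure (distr M (count_space UNIV) (xi j)) {l}" if "j \<ge> 1" for j
    using that by (subst measure_distr) (auto intro: xi_measurable simp: vimage_def Int_def conj_commute)
  assume "k \<ge> 1"
  with *[of k] *[of 1] xi_ident[of k] show ?thesis by (simp add: p_def)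
qed

lemma cylinder_eq_Inter: "cylinder s = (\<Inter>j\<in>{1..length s}. {w \<in> space M. xi j w = s ! (length s - j)}) \<inter> space M"
proof -
  have "history (length s) w = s \<longleftrightarrow> (\<forall>j\<in>{1..length s}. xi j w = s ! (length s - j))" for w
  proof
    assume "history (length s) w = s"
    then show "\<forall>j\<in>{1..length s}. xi j w = s ! (length s - j)"
      using nth_history[of "length s - j" "length s" w for j] by auto
  next
    assume H: "\<forall>j\<in>{1..length s}. xi j w = s ! (length s - j)"
    show "history (length s) w = s"
      by (rule nth_equalityI) (use H in \<open>auto simp: nth_history\<close>)
  qed
  then show ?thesis by (auto simp: cylinder_def)
qed

lemma prob_cylinder: "prob (cylinder s) = (\<Prod>j\<in>{1..length s}. p (s ! (length s - j)))"
proof (cases "s = []")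
  case False
  let ?A = "\<lambda>j. xi j -` {s ! (length s - j)} \<inter> space M"
  have indep: "indep_sets (\<lambda>i. {xi i -` A \<inter> space M | A. A \<in> sets (count_space UNIV)}) {1..}"
    using xi_indep unfolding indep_vars_def2 by blast
  have "prob (\<Inter>j\<in>{1..length s}. ?A j) = (\<Prod>j\<in>{1..length s}. prob (?A j))"
    using False by (intro indep[unfolded indep_sets_def, THEN conjunct2, rule_format]) (auto simp: Suc_le_eq)
  moreover have "(\<Inter>j\<in>{1..length s}. ?A j) = cylinder s"
    using False by (auto simp: cylinder_eq_Inter Suc_le_eq)
  moreover have "prob (?A j) = p (s ! (length s - j))" if "j \<in> {1..length s}" for j
    using prob_xi_eq[of j] that by (simp add: vimage_def Int_def conj_commute)
  ultimately show ?thesis by simp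
qed (simp add: prob_space)

lemma prob_cylinder_Cons: "prob (cylinder (l # s)) = p l * prob (cylinder s)"
proof -
  have "(\<Prod>j\<in>{1..length s}. p ((l # s) ! (Suc (length s) - j))) = (\<Prod>j\<in>{1..length s}. p (s ! (length s - j)))"
    by (intro prod.cong) (auto simp: Suc_diff_le)
  then show ?thesis by (simp add: prob_cylinder prod.cl_ivl_Suc)
qed

lemma sets_history_pred: "{w \<in> space M. P (history N w)} \<in> sets M"
proof -
  have "{w \<in> space M. P (history N w)} = (\<Union>s\<in>{s. set s \<subseteq> UNIV \<and> length s = N \<and> P s}. cylinder s)"
    by (auto simp: cylinder_def)
  also have "\<dots> \<in> sets M"
    by (intro sets.finite_UN finite_subset[OF _ finite_lists_length_eq[of UNIV N]]) auto
  finally show ?thesis .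
qed

lemma sets_stopped_history_pred: "{w \<in> space M. P (\<lambda>k. history (min k N) w)} \<in> sets M"
proof -
  have "(\<lambda>k. history (min k N) w) = (\<lambda>k. drop (N - min k N) (history N w))" for w
    using history_eq_drop[of "min k N" N w for k] by simp
  then show ?thesis using sets_history_pred[of "\<lambda>h. P (\<lambda>k. drop (N - min k N) h)" N] by simp
qed

lemma history_measurable: "history k \<in> measurable M (count_space UNIV)"
  by (rule measurableI) (use sets_history_pred[of "\<lambda>s. s \<in> _" k] in \<open>auto simp: vimage_def Int_def conj_commute\<close>)

lemma prob_cylinder_Int_split:
  assumes "Q \<inter> space M \<in> sets M"
  shows "prob (cylinder s \<inter> Q) = (\<Sum>l\<in>UNIV. prob (cylinder (l # s) \<inter> Q))"
proof -
  have "prob (cylinder s \<inter> Q) = prob (\<Union>l. cylinder (l # s) \<inter> (Q \<inter> space M))"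
    by (rule arg_cong[where f = prob]) (auto simp: cylinder_Cons cylinder_def)
  also have "\<dots> = (\<Sum>l\<in>UNIV. prob (cylinder (l # s) \<inter> (Q \<inter> space M)))"
    using assms by (intro measure_finite_Union) (auto simp: disjoint_family_on_def, auto simp: cylinder_def)
  also have "\<dots> = (\<Sum>l\<in>UNIV. prob (cylinder (l # s) \<inter> Q))"
    by (intro sum.cong) (auto simp: cylinder_def intro!: arg_cong[where f = prob])
  finally show ?thesis .
qed

lemma sum_p: "(\<Sum>l\<in>UNIV. p l) = 1"
  using prob_cylinder_Int_split[of "space M" "[]"] by (simp add: prob_cylinder_Cons prob_space)

definition visits :: "('i list \<Rightarrow> bool) \<Rightarrow> (nat \<Rightarrow> 'm set) \<Rightarrow> nat \<Rightarrow> nat \<Rightarrow> 'm set" where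
  "visits H R n N = {w \<in> space M. \<exists>k. n \<le> k \<and> k \<le> N \<and> H (history k w) \<and> w \<in> R k}"

lemma sets_visits:
  assumes "\<And>k. R k \<in> sets M"
  shows "visits H R n N \<in> sets M"
proof -
  have "visits H R n N = (\<Union>k\<in>{n..N}. {w \<in> space M. H (history k w)} \<inter> R k)"
    using sets.sets_into_space[OF assms] by (auto simp: visits_def)
  also have "\<dots> \<in> sets M"
    using assms by (intro sets.finite_UN) (auto intro: sets_history_pred)
  finally show ?thesis .
qed

lemma visits_empty: "N < n \<Longrightarrow> visits H R n N = {}"
  by (auto simp: visits_def)

lemma cylinder_Int_visits_not_now:
  assumes "\<not> H s"
  shows "cylinder s \<inter> visits H R (length s) N = cylinder s \<inter> visits H R (Suc (length s)) N"
  using assms by (auto simp: visits_def cylinder_def; metis le_antisym not_less_eq_eq Suc_leD)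

lemma prob_cylinder_Int_visits_split:
  assumes "\<not> H s" and R: "\<And>k. R k \<in> sets M"
  shows "prob (cylinder s \<inter> visits H R (length s) N)
    = (\<Sum>l\<in>UNIV. prob (cylinder (l # s) \<inter> visits H R (length (l # s)) N))"
  using prob_cylinder_Int_split[of "visits H R (Suc (length s)) N" s] sets_visits[OF R]
  by (simp add: cylinder_Int_visits_not_now[of H s, OF assms(1)])

lemma maximal_inequality:
  assumes sm: "nonneg_supermartingale p f" and b: "b > 0"
  shows "b * prob (cylinder s \<inter> visits (\<lambda>h. b \<le> f h) (\<lambda>_. space M) (length s) N) \<le> f s * prob (cylinder s)"
proof (cases "length s \<le> N")
  case True
  let ?V = "\<lambda>s. cylinder s \<inter> visits (\<lambda>h. b \<le> f h) (\<lambda>_. space M) (length s) N"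
  have now: "b * prob (?V s) \<le> f s * prob (cylinder s)" if "b \<le> f s" for s
  proof -
    have "b * prob (?V s) \<le> b * prob (cylinder s)"
      using b by (intro mult_left_mono finite_measure_mono) auto
    also have "\<dots> \<le> f s * prob (cylinder s)" using that by (intro mult_right_mono) auto
    finally show ?thesis .
  qed
  have "b * prob (?V s) \<le> f s * prob (cylinder s)" if "N = length s + d" for d s
    using that
  proof (induction d arbitrary: s)
    case 0
    then show ?case using now nonneg_supermartingaleD(1)[OF sm, of s]
      by (cases "b \<le> f s") (auto simp: cylinder_Int_visits_not_now visits_empty)
  next
    case (Suc d)
    show ?case
    proof (cases "b \<le> f s")
      case False
      have "b * prob (?V s) = (\<Sum>l\<in>UNIV. b * prob (?V (l # s)))"
        by (subst prob_cylinder_Int_visits_split) (use False in \<open>auto simp: sum_distrib_left\<close>)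
      also have "\<dots> \<le> (\<Sum>l\<in>UNIV. f (l # s) * prob (cylinder (l # s)))"
        using Suc.IH[of "_ # s"] Suc.prems by (intro sum_mono) simp
      also have "\<dots> = (\<Sum>l\<in>UNIV. p l * f (l # s)) * prob (cylinder s)"
        by (simp add: prob_cylinder_Cons sum_distrib_right sum_distrib_left mult_ac)
      also have "\<dots> \<le> f s * prob (cylinder s)"
        using nonneg_supermartingaleD(2)[OF sm] by (intro mult_right_mono) auto
      finally show ?thesis .
    qed (rule now)
  qed
  then show ?thesis using True by (metis le_add_diff_inverse)
qed (use nonneg_supermartingaleD(1)[OF sm] in \<open>simp add: visits_empty\<close>)

text \<open>Conditioning on the first visit to \<open>H\<close>: as \<open>R\<close> decreases, \<open>R\<close> at some visit implies
  \<open>R\<close> at the first one.\<close>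

lemma prob_visits_le_first_visit:
  assumes R: "\<And>k. R k \<in> sets M" and anti: "antimono R"
    and hyp: "\<And>s'. H s' \<Longrightarrow> prob (cylinder s' \<inter> R (length s')) \<le> q * prob (cylinder s')"
    and q: "q \<ge> 0"
  shows "prob (cylinder s \<inter> visits H R (length s) N)
     \<le> q * prob (cylinder s \<inter> visits H (\<lambda>_. space M) (length s) N)"
proof (cases "length s \<le> N")
  case True
  let ?V = "\<lambda>R s. cylinder s \<inter> visits H R (length s) N"
  have now: "prob (?V R s) \<le> q * prob (?V (\<lambda>_. space M) s)" if "H s" "length s \<le> N" for s
  proof -
    have "prob (?V R s) \<le> prob (cylinder s \<inter> R (length s))"
      using R anti by (intro finite_measure_mono) (auto simp: visits_def antimono_def)
    also have "\<dots> \<le> q * prob (cylinder s)" using hyp that by simp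
    also have "q * prob (cylinder s) = q * prob (?V (\<lambda>_. space M) s)"
      using that by (auto simp: visits_def cylinder_def intro!: arg_cong[where f = prob])
    finally show ?thesis .
  qed
  have "prob (?V R s) \<le> q * prob (?V (\<lambda>_. space M) s)" if "N = length s + d" for d s
    using that
  proof (induction d arbitrary: s)
    case 0
    then show ?case using now by (cases "H s") (auto simp: cylinder_Int_visits_not_now visits_empty)
  next
    case (Suc d)
    show ?case
    proof (cases "H s")
      case False
      have "prob (?V R s) = (\<Sum>l\<in>UNIV. prob (?V R (l # s)))"
        using False R by (rule prob_cylinder_Int_visits_split)
      also have "\<dots> \<le> (\<Sum>l\<in>UNIV. q * prob (?V (\<lambda>_. space M) (l # s)))"
        using Suc.IH[of "_ # s"] Suc.prems by (intro sum_mono) simp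
      also have "\<dots> = q * prob (?V (\<lambda>_. space M) s)"
        using False by (simp add: prob_cylinder_Int_visits_split sum_distrib_left)
      finally show ?thesis .
    qed (use Suc.prems now in simp)
  qed
  then show ?thesis using True by (metis le_add_diff_inverse)
qed (use q in \<open>simp add: visits_empty\<close>)

lemma visits_antimono: "antimono (\<lambda>n. visits H R n N)"
  by (auto simp: antimono_def visits_def; meson order_trans)

lemma visits_mono: "mono (visits H R n)"
  by (auto simp: mono_def visits_def intro: order_trans)

context
  fixes f :: "'i list \<Rightarrow> real" and a b :: real
  assumes sm: "nonneg_supermartingale p f" and a: "0 \<le> a" and ab: "a < b"
begin

definition upcrossing_event :: "nat \<Rightarrow> nat \<Rightarrow> nat \<Rightarrow> 'm set" where
  "upcrossing_event j N n = {w \<in> space M. has_upcrossings (\<lambda>k. f (history k w)) a b j n N}"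

lemma sets_upcrossing_event: "upcrossing_event j N n \<in> sets M"
proof -
  have "has_upcrossings (\<lambda>k. f (history k w)) a b j n N = has_upcrossings (\<lambda>k. f (history (min k N) w)) a b j n N" for w
    by (rule has_upcrossings_cong) simp
  then show ?thesis
    using sets_stopped_history_pred[of "\<lambda>h. has_upcrossings (\<lambda>k. f (h k)) a b j n N" N]
    by (simp add: upcrossing_event_def)
qed

lemma upcrossing_event_0: "upcrossing_event 0 N n = space M"
  by (simp add: upcrossing_event_def)

lemma upcrossing_event_Suc:
  "upcrossing_event (Suc j) N n =
    visits (\<lambda>h. f h \<le> a) (\<lambda>k. visits (\<lambda>h. b \<le> f h) (upcrossing_event j N) k N) n N"
  by (auto simp: upcrossing_event_def visits_def)

lemma upcrossing_event_antimono: "antimono (upcrossing_event j N)"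
  by (auto simp: antimono_def upcrossing_event_def intro: has_upcrossings_start_antimono)

lemma prob_rise_then_upcrossings_le:
  assumes up: "\<And>s. prob (cylinder s \<inter> upcrossing_event j N (length s)) \<le> (a/b)^j * prob (cylinder s)"
  shows "prob (cylinder s \<inter> visits (\<lambda>h. b \<le> f h) (upcrossing_event j N) (length s) N)
    \<le> (a/b)^j * (f s / b) * prob (cylinder s)"
proof -
  have "b > 0" using a ab by simp
  have "prob (cylinder s \<inter> visits (\<lambda>h. b \<le> f h) (upcrossing_event j N) (length s) N)
    \<le> (a/b)^j * prob (cylinder s \<inter> visits (\<lambda>h. b \<le> f h) (\<lambda>_. space M) (length s) N)"
    using up a \<open>b > 0\<close>
    by (intro prob_visits_le_first_visit sets_upcrossing_event upcrossing_event_antimono) auto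
  also have "\<dots> \<le> (a/b)^j * (f s / b * prob (cylinder s))"
    using maximal_inequality[OF sm \<open>b > 0\<close>, of s N] a \<open>b > 0\<close>
    by (intro mult_left_mono) (auto simp: field_simps)
  finally show ?thesis by (simp add: mult_ac)
qed

lemma upcrossing_inequality:
  "prob (cylinder s \<inter> upcrossing_event j N (length s)) \<le> (a/b)^j * prob (cylinder s)"
proof (induction j arbitrary: s)
  case 0
  then show ?case by (simp add: upcrossing_event_0)
next
  case (Suc j)
  have "b > 0" using a ab by simp
  let ?R = "\<lambda>k. visits (\<lambda>h. b \<le> f h) (upcrossing_event j N) k N"
  have "prob (cylinder s \<inter> upcrossing_event (Suc j) N (length s))
    \<le> (a/b)^Suc j * prob (cylinder s \<inter> visits (\<lambda>h. f h \<le> a) (\<lambda>_. space M) (length s) N)"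
    unfolding upcrossing_event_Suc
  proof (intro prob_visits_le_first_visit sets_visits sets_upcrossing_event visits_antimono)
    fix s' assume "f s' \<le> a"
    then have "(a/b)^j * (f s' / b) * prob (cylinder s') \<le> (a/b)^j * (a / b) * prob (cylinder s')"
      using a \<open>b > 0\<close> by (intro mult_right_mono mult_left_mono divide_right_mono) auto
    then show "prob (cylinder s' \<inter> ?R (length s')) \<le> (a/b)^Suc j * prob (cylinder s')"
      using prob_rise_then_upcrossings_le[OF Suc.IH, of s'] by (simp add: mult_ac)
  qed (use a \<open>b > 0\<close> in auto)
  also have "\<dots> \<le> (a/b)^Suc j * prob (cylinder s)"
    using a \<open>b > 0\<close> by (intro mult_left_mono finite_measure_mono) auto
  finally show ?case .
qed

lemma AE_finitely_many_upcrossings: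
  "AE w in M. \<exists>j. \<forall>N. \<not> has_upcrossings (\<lambda>k. f (history k w)) a b j 0 N"
proof -
  let ?U = "\<Inter>j. \<Union>N. upcrossing_event j N 0"
  have "AE w in M. w \<notin> ?U"
  proof (rule AE_not_in_if_prob_le_null_seq)
    show "?U \<in> sets M" using sets_upcrossing_event by blast
    show "(\<lambda>j. (a/b)^j) \<longlonglongrightarrow> 0" using a ab by (intro LIMSEQ_power_zero) simp
    fix j
    have "prob ?U \<le> prob (\<Union>N. upcrossing_event j N 0)"
      using sets_upcrossing_event by (intro finite_measure_mono) auto
    also have "\<dots> \<le> (a/b)^j"
      using upcrossing_inequality[of "[]" j] sets_upcrossing_event
      by (intro prob_incseq_UN_le) (auto simp: incseq_def upcrossing_event_def prob_space
          intro: has_upcrossings_end_mono)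
    finally show "prob ?U \<le> (a/b)^j" .
  qed
  with AE_space show ?thesis by eventually_elim (auto simp: upcrossing_event_def)
qed

end

lemma AE_bounded:
  assumes sm: "nonneg_supermartingale p f"
  shows "AE w in M. \<exists>B. \<forall>k. f (history k w) \<le> B"
proof -
  let ?U = "\<Inter>n. \<Union>N. visits (\<lambda>h. real (Suc n) \<le> f h) (\<lambda>_. space M) 0 N"
  have "AE w in M. w \<notin> ?U"
  proof (rule AE_not_in_if_prob_le_null_seq)
    show "?U \<in> sets M" using sets_visits[of "\<lambda>_. space M"] by blast
    show "(\<lambda>n. f [] / real (Suc n)) \<longlonglongrightarrow> 0"
      using LIMSEQ_Suc[OF lim_const_over_n[of "f []"]] by simp
    fix n
    have "prob ?U \<le> prob (\<Union>N. visits (\<lambda>h. real (Suc n) \<le> f h) (\<lambda>_. space M) 0 N)"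
      using sets_visits[of "\<lambda>_. space M"] by (intro finite_measure_mono) auto
    also have "\<dots> \<le> f [] / real (Suc n)"
    proof (intro prob_incseq_UN_le visits_mono sets_visits)
      fix N
      show "prob (visits (\<lambda>h. real (Suc n) \<le> f h) (\<lambda>_. space M) 0 N) \<le> f [] / real (Suc n)"
        using maximal_inequality[OF sm, of "real (Suc n)" "[]" N]
        by (simp add: prob_space field_simps Int_absorb1 visits_def)
    qed auto
    finally show "prob ?U \<le> f [] / real (Suc n)" .
  qed
  with AE_space show ?thesis
  proof eventually_elim
    case (elim w)
    then obtain n where "\<forall>k. f (history k w) < real (Suc n)" by (auto simp: visits_def not_le)
    then show ?case by (auto intro: less_imp_le)
  qed
qed

theorem AE_convergent_nonneg_supermartingale:
  assumes sm: "nonneg_supermartingale p f"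
  shows "AE w in M. convergent (\<lambda>k. f (history k w))"
proof -
  have "AE w in M. \<forall>q::rat \<times> rat. 0 \<le> fst q \<longrightarrow> fst q < snd q \<longrightarrow>
    (\<exists>j. \<forall>N. \<not> has_upcrossings (\<lambda>k. f (history k w)) (of_rat (fst q)) (of_rat (snd q)) j 0 N)"
    unfolding AE_all_countable
    by (auto intro!: AE_finitely_many_upcrossings[OF sm] simp: of_rat_less)
  with AE_bounded[OF sm] show ?thesis
  proof eventually_elim
    case (elim w)
    then obtain B where "\<And>k. f (history k w) \<le> B" by blast
    with elim(2) show ?case
      by (intro convergent_if_no_rational_upcrossings[of _ B] nonneg_supermartingaleD(1)[OF sm]) auto
  qed
qed

end

section \<open>The weighted norm and firmly nonexpansive maps\<close>

definition weighted_sqnorm :: "('i::finite \<Rightarrow> real) \<Rightarrow> ('a::real_normed_vector)^'i \<Rightarrow> real" where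
  "weighted_sqnorm p v = (\<Sum>l\<in>UNIV. (norm (v $ l))\<^sup>2 / p l)"

lemma norm_vec_power2: "(norm (v :: ('a::real_normed_vector)^'i::finite))\<^sup>2 = (\<Sum>l\<in>UNIV. (norm (v $ l))\<^sup>2)"
  unfolding norm_vec_def L2_set_def by (simp add: sum_nonneg)

lemma S_hat_nth: "S_hat S l z $ j = (if j = l then S z $ l else z $ j)"
  by (simp add: S_hat_def)

lemma weighted_sqnorm_S_hat:
  "weighted_sqnorm p (S_hat S l z - d)
     = weighted_sqnorm p (z - d) + ((norm (S z $ l - d $ l))\<^sup>2 - (norm (z $ l - d $ l))\<^sup>2) / p l"
proof -
  have "weighted_sqnorm p (S_hat S l z - d) = (\<Sum>j\<in>UNIV.
      if j = l then (norm (S z $ l - d $ l))\<^sup>2 / p l else (norm (z $ j - d $ j))\<^sup>2 / p j)"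
    unfolding weighted_sqnorm_def by (intro sum.cong) (auto simp: S_hat_nth)
  also have "\<dots> = weighted_sqnorm p (z - d) + (norm (S z $ l - d $ l))\<^sup>2 / p l - (norm (z $ l - d $ l))\<^sup>2 / p l"
    unfolding weighted_sqnorm_def by (simp add: sum.If_cases Compl_eq_Diff_UNIV sum_diff1)
  finally show ?thesis by (simp add: diff_divide_distrib)
qed

lemma expected_weighted_sqnorm_S_hat:
  assumes p: "\<And>l. p l > 0" and sum_p: "(\<Sum>l\<in>UNIV. p l) = 1"
  shows "(\<Sum>l\<in>UNIV. p l * weighted_sqnorm p (S_hat S l z - d))
    = weighted_sqnorm p (z - d) + (norm (S z - d))\<^sup>2 - (norm (z - d))\<^sup>2"
proof -
  have "p l * weighted_sqnorm p (S_hat S l z - d)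
    = p l * weighted_sqnorm p (z - d) + ((norm ((S z - d) $ l))\<^sup>2 - (norm ((z - d) $ l))\<^sup>2)" for l
    using p[of l] by (simp add: weighted_sqnorm_S_hat distrib_left)
  then show ?thesis
    by (simp add: sum.distrib sum_subtractf sum_distrib_right[symmetric] sum_p norm_vec_power2)
qed

lemma firmly_nonexpansive_fixpoint_ineq:
  fixes S :: "'b::real_inner \<Rightarrow> 'b"
  assumes "firmly_nonexpansive_on Y S" "z \<in> Y" "d \<in> fixset Y S"
  shows "(norm (S z - d))\<^sup>2 \<le> (norm (z - d))\<^sup>2 - (norm (S z - z))\<^sup>2"
proof -
  have "S d = d" "inner (z - d) (S z - d) \<ge> (norm (S z - d))\<^sup>2"
    using assms unfolding firmly_nonexpansive_on_def fixset_def by force+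
  moreover have "(norm (z - d))\<^sup>2
    = (norm (S z - d))\<^sup>2 + (norm (S z - z))\<^sup>2 + 2 * (inner (z - d) (S z - d) - (norm (S z - d))\<^sup>2)"
    by (simp add: power2_norm_eq_inner inner_diff_left inner_diff_right inner_commute)
  ultimately show ?thesis by simp
qed

lemma firmly_nonexpansive_imp_nonexpansive:
  fixes S :: "'b::real_inner \<Rightarrow> 'b"
  assumes "firmly_nonexpansive_on Y S" "z \<in> Y" "d \<in> Y"
  shows "norm (S z - S d) \<le> norm (z - d)"
proof -
  have "(norm (S z - S d))\<^sup>2 \<le> inner (z - d) (S z - S d)"
    using assms unfolding firmly_nonexpansive_on_def by force
  also have "\<dots> \<le> norm (z - d) * norm (S z - S d)" by (rule norm_cauchy_schwarz)
  finally show ?thesis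
    by (cases "norm (S z - S d) = 0") (auto simp: power2_eq_square mult_le_cancel_right)
qed

lemma weighted_sqnorm_nonneg: "(\<And>l. p l > 0) \<Longrightarrow> weighted_sqnorm p v \<ge> 0"
  unfolding weighted_sqnorm_def by (intro sum_nonneg) (auto intro: divide_nonneg_pos)

lemma norm_power2_le_weighted_sqnorm:
  assumes p: "\<And>l. p l > 0" and sum_p: "(\<Sum>l\<in>UNIV. p l) = 1"
  shows "(norm v)\<^sup>2 \<le> weighted_sqnorm p (v :: ('a::real_normed_vector)^'i::finite)"
  unfolding norm_vec_power2 weighted_sqnorm_def
proof (intro sum_mono)
  fix l
  have "p l \<le> (\<Sum>l\<in>UNIV. p l)" by (rule member_le_sum) (auto intro: less_imp_le p)
  then show "(norm (v $ l))\<^sup>2 \<le> (norm (v $ l))\<^sup>2 / p l"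
    using p[of l] sum_p by (simp add: le_divide_eq mult_left_le)
qed

lemma weighted_sqnorm_le:
  assumes p: "\<And>l. p l > 0"
  shows "weighted_sqnorm p (v :: ('a::real_normed_vector)^'i::finite) \<le> (\<Sum>l\<in>UNIV. 1 / p l) * (norm v)\<^sup>2"
  unfolding weighted_sqnorm_def sum_distrib_right
proof (intro sum_mono)
  fix l :: 'i
  have "(norm (v $ l))\<^sup>2 \<le> (norm v)\<^sup>2"
    unfolding norm_vec_power2[of v] by (rule member_le_sum[where f = "\<lambda>l. (norm (v $ l))\<^sup>2"]) auto
  then show "(norm (v $ l))\<^sup>2 / p l \<le> 1 / p l * (norm v)\<^sup>2"
    using p[of l] by (simp add: divide_right_mono)
qed

lemma weighted_sqnorm_add_le:
  assumes p: "\<And>l. p l > 0"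
  shows "weighted_sqnorm p (v + w :: ('a::real_normed_vector)^'i::finite) \<le> 2 * weighted_sqnorm p v + 2 * weighted_sqnorm p w"
  unfolding weighted_sqnorm_def sum_distrib_left sum.distrib[symmetric]
proof (intro sum_mono)
  fix l
  have "(norm (v $ l + w $ l))\<^sup>2 \<le> (norm (v $ l) + norm (w $ l))\<^sup>2"
    by (intro power_mono norm_triangle_ineq) auto
  also have "\<dots> \<le> 2 * (norm (v $ l))\<^sup>2 + 2 * (norm (w $ l))\<^sup>2"
    using sum_squares_bound[of "norm (v $ l)" "norm (w $ l)"] by (simp add: power2_sum)
  finally show "(norm ((v + w) $ l))\<^sup>2 / p l \<le> 2 * ((norm (v $ l))\<^sup>2 / p l) + 2 * ((norm (w $ l))\<^sup>2 / p l)"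
    using p[of l] by (simp add: divide_right_mono add_divide_distrib[symmetric])
qed

lemma weighted_sqnorm_minus_commute: "weighted_sqnorm p (v - w) = weighted_sqnorm p (w - v)"
  unfolding weighted_sqnorm_def by (simp add: norm_minus_commute)

lemma tendsto_weighted_sqnorm:
  assumes "x \<longlonglongrightarrow> u" and "\<And>l. p l > 0"
  shows "(\<lambda>k. weighted_sqnorm p (x k :: ('a::real_normed_vector)^'i::finite)) \<longlonglongrightarrow> weighted_sqnorm p u"
  unfolding weighted_sqnorm_def using assms(2)
  by (intro tendsto_intros tendsto_vec_nth assms(1)) (simp add: less_imp_neq[symmetric])

lemma countable_dense_subset:
  fixes A :: "'a::{metric_space, second_countable_topology} set"
  obtains D where "countable D" "D \<subseteq> A" "\<And>u e. u \<in> A \<Longrightarrow> e > 0 \<Longrightarrow> \<exists>d\<in>D. dist u d < e"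
proof -
  obtain \<B> where \<B>: "countable \<B>" "{} \<notin> \<B>" "\<And>C. C \<in> \<B> \<Longrightarrow> openin (top_of_set A) C"
    "\<And>T. openin (top_of_set A) T \<Longrightarrow> \<exists>\<U>. \<U> \<subseteq> \<B> \<and> T = \<Union>\<U>"
    by (rule subset_second_countable[of A]) (rule that)
  define c where "c C = (SOME d. d \<in> C)" for C :: "'a set"
  have c: "c C \<in> C" if "C \<in> \<B>" for C
    using \<B>(2) that unfolding c_def by (metis ex_in_conv someI_ex)
  show ?thesis
  proof
    show "countable (c ` \<B>)" using \<B>(1) by simp
    show "c ` \<B> \<subseteq> A" using c openin_imp_subset[OF \<B>(3)] by auto
    fix u e assume "u \<in> A" "(e::real) > 0"
    then have "openin (top_of_set A) (A \<inter> ball u e)"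
      by (simp add: openin_open_Int)
    then obtain \<U> where "\<U> \<subseteq> \<B>" "A \<inter> ball u e = \<Union>\<U>" using \<B>(4) by meson
    moreover have "u \<in> A \<inter> ball u e" using \<open>u \<in> A\<close> \<open>e > 0\<close> by simp
    ultimately obtain C where "C \<in> \<B>" "C \<subseteq> ball u e" by blast
    then have "c C \<in> ball u e" using c by blast
    then show "\<exists>d\<in>c ` \<B>. dist u d < e" using \<open>C \<in> \<B>\<close> by auto
  qed
qed

lemma closed_prod_space:
  assumes "\<And>l. subspace (V l)"
  shows "closed (prod_space (V :: 'i::finite \<Rightarrow> ('a::euclidean_space) set))"
proof -
  have "prod_space V = (\<Inter>l. (\<lambda>z. z $ l) -` V l)" by (auto simp: prod_space_def)
  moreover have "closed ((\<lambda>z::'a^'i. z $ l) -` V l)" for l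
    by (intro continuous_closed_vimage closed_subspace assms isCont_vec_nth continuous_ident)
  ultimately show ?thesis by auto
qed

lemma fixpoint_if_asymptotically_regular:
  fixes x :: "nat \<Rightarrow> 'b::real_inner"
  assumes fne: "firmly_nonexpansive_on Y S" and "closed Y" and x: "\<And>k. x k \<in> Y"
    and res: "(\<lambda>k. S (x k) - x k) \<longlonglongrightarrow> 0" and r: "strict_mono r" and xr: "(x \<circ> r) \<longlonglongrightarrow> u"
  shows "u \<in> fixset Y S"
proof -
  have u: "u \<in> Y" using closed_sequentially[OF \<open>closed Y\<close> _ xr] x by simp
  have "(\<lambda>k. S (x (r k)) - S u) \<longlonglongrightarrow> 0"
  proof (rule Lim_null_comparison)
    show "\<forall>\<^sub>F k in sequentially. norm (S (x (r k)) - S u) \<le> norm (x (r k) - u)"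
      using firmly_nonexpansive_imp_nonexpansive[OF fne x u] by simp
    show "(\<lambda>k. norm (x (r k) - u)) \<longlonglongrightarrow> 0"
      using xr by (simp add: o_def tendsto_norm_zero LIM_zero)
  qed
  then have "(\<lambda>k. S (x (r k))) \<longlonglongrightarrow> S u" by (simp add: LIM_zero_iff)
  moreover have "(\<lambda>k. (S (x (r k)) - x (r k)) + x (r k)) \<longlonglongrightarrow> 0 + u"
    using LIMSEQ_subseq_LIMSEQ[OF res r] xr by (intro tendsto_add) (auto simp: o_def)
  then have "(\<lambda>k. S (x (r k))) \<longlonglongrightarrow> u" by simp
  ultimately show ?thesis using u LIMSEQ_unique by (auto simp: fixset_def)
qed

lemma bounded_if_convergent_weighted_sqnorm:
  assumes p: "\<And>l. p l > 0" and sum_p: "(\<Sum>l\<in>UNIV. p l) = 1"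
    and conv: "convergent (\<lambda>k. weighted_sqnorm p (x k - d :: ('a::real_normed_vector)^'i::finite))"
  shows "bounded (range x)"
proof -
  obtain K where K: "\<And>k. norm (weighted_sqnorm p (x k - d)) \<le> K"
    using convergent_imp_Bseq[OF conv] unfolding Bseq_def by blast
  have "norm (x k - d) \<le> sqrt K" for k
    using norm_power2_le_weighted_sqnorm[OF p sum_p, of "x k - d"] K[of k] by (simp add: real_le_rsqrt)
  moreover have "norm (x k) \<le> norm d + norm (x k - d)" for k
    using norm_triangle_ineq[of d "x k - d"] by simp
  ultimately have "norm (x k) \<le> norm d + sqrt K" for k
    by (smt (verit))
  then show ?thesis unfolding bounded_iff by blast
qed

lemma weighted_sqnorm_approx:
  fixes u :: "('a::real_normed_vector)^'i::finite"
  assumes p: "\<And>l. p l > 0" and dense: "\<And>e. e > 0 \<Longrightarrow> \<exists>d\<in>D. dist u d < e" and "\<epsilon> > 0"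
  shows "\<exists>d\<in>D. weighted_sqnorm p (u - d) < \<epsilon>"
proof -
  define C where "C = (\<Sum>l\<in>UNIV. 1 / p l)"
  have "C \<ge> 0" unfolding C_def using p by (intro sum_nonneg) (auto intro: less_imp_le)
  then obtain d where d: "d \<in> D" "norm (u - d) < sqrt (\<epsilon> / (C + 1))"
    using dense[of "sqrt (\<epsilon> / (C + 1))"] \<open>\<epsilon> > 0\<close> by (auto simp: dist_norm)
  have "weighted_sqnorm p (u - d) \<le> C * (norm (u - d))\<^sup>2"
    unfolding C_def by (rule weighted_sqnorm_le[OF p])
  also have "\<dots> \<le> C * (\<epsilon> / (C + 1))"
  proof (intro mult_left_mono \<open>C \<ge> 0\<close>)
    have "(norm (u - d))\<^sup>2 \<le> (sqrt (\<epsilon> / (C + 1)))\<^sup>2"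
      using d(2) by (intro power_mono) auto
    then show "(norm (u - d))\<^sup>2 \<le> \<epsilon> / (C + 1)" using \<open>C \<ge> 0\<close> \<open>\<epsilon> > 0\<close> by simp
  qed
  also have "\<dots> < \<epsilon>" using \<open>C \<ge> 0\<close> \<open>\<epsilon> > 0\<close> by (simp add: field_simps)
  finally show ?thesis using d(1) by blast
qed

text \<open>Opial's argument: a cluster point \<open>u\<close> that is approximated by points \<open>d\<close> along which
  \<open>weighted_sqnorm p (x k - d)\<close> converges is the limit of \<open>x\<close>, because these limits equal
  \<open>weighted_sqnorm p (u - d)\<close>, which is small.\<close>

lemma tendsto_cluster_point_if_convergent_weighted_sqnorm:
  fixes x :: "nat \<Rightarrow> ('a::real_normed_vector)^'i::finite"
  assumes p: "\<And>l. p l > 0" and sum_p: "(\<Sum>l\<in>UNIV. p l) = 1"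
    and r: "strict_mono r" and xr: "(x \<circ> r) \<longlonglongrightarrow> u"
    and dense: "\<And>e. e > 0 \<Longrightarrow> \<exists>d\<in>D. dist u d < e"
    and conv: "\<And>d. d \<in> D \<Longrightarrow> convergent (\<lambda>k. weighted_sqnorm p (x k - d))"
  shows "x \<longlonglongrightarrow> u"
proof (rule LIMSEQ_I)
  have lim_d: "(\<lambda>k. weighted_sqnorm p (x k - d)) \<longlonglongrightarrow> weighted_sqnorm p (u - d)" if d: "d \<in> D" for d
  proof -
    obtain L where L: "(\<lambda>k. weighted_sqnorm p (x k - d)) \<longlonglongrightarrow> L"
      using conv[OF d] by (auto simp: convergent_def)
    have "((\<lambda>k. weighted_sqnorm p (x k - d)) \<circ> r) \<longlonglongrightarrow> weighted_sqnorm p (u - d)"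
      unfolding o_def using xr by (intro tendsto_weighted_sqnorm p tendsto_diff) (auto simp: o_def)
    with LIMSEQ_subseq_LIMSEQ[OF L r] have "L = weighted_sqnorm p (u - d)" by (rule LIMSEQ_unique)
    then show ?thesis using L by simp
  qed
  fix e :: real assume "e > 0"
  then obtain d where d: "d \<in> D" and small: "weighted_sqnorm p (u - d) < e\<^sup>2 / 8"
    using weighted_sqnorm_approx[where p = p and \<epsilon> = "e\<^sup>2 / 8", OF p dense] by auto
  have "\<forall>\<^sub>F k in sequentially. weighted_sqnorm p (x k - d) < weighted_sqnorm p (u - d) + e\<^sup>2 / 8"
    using lim_d[OF d(1)] \<open>e > 0\<close> by (intro order_tendstoD) auto
  then obtain N where N: "\<And>k. k \<ge> N \<Longrightarrow> weighted_sqnorm p (x k - d) < weighted_sqnorm p (u - d) + e\<^sup>2 / 8"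
    unfolding eventually_sequentially by blast
  show "\<exists>N. \<forall>n\<ge>N. norm (x n - u) < e"
  proof (intro exI allI impI)
    fix n assume "n \<ge> N"
    have "(norm (x n - u))\<^sup>2 \<le> weighted_sqnorm p (x n - u)"
      by (rule norm_power2_le_weighted_sqnorm[OF p sum_p])
    also have "x n - u = (x n - d) + (d - u)" by simp
    also have "weighted_sqnorm p \<dots> \<le> 2 * weighted_sqnorm p (x n - d) + 2 * weighted_sqnorm p (d - u)"
      by (rule weighted_sqnorm_add_le[OF p])
    also have "weighted_sqnorm p (d - u) = weighted_sqnorm p (u - d)"
      by (rule weighted_sqnorm_minus_commute)
    also have "2 * weighted_sqnorm p (x n - d) + 2 * weighted_sqnorm p (u - d) < e\<^sup>2"
      using N[OF \<open>n \<ge> N\<close>] small zero_less_power[OF \<open>e > 0\<close>, of 2] by linarith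
    finally show "norm (x n - u) < e" using \<open>e > 0\<close> by (simp add: power_less_imp_less_base)
  qed
qed

lemma tendsto_fixpoint_if_convergent_weighted_sqnorm:
  fixes x :: "nat \<Rightarrow> ('a::euclidean_space)^'i::finite"
  assumes fne: "firmly_nonexpansive_on Y S" and "closed Y" and x: "\<And>k. x k \<in> Y"
    and p: "\<And>l. p l > 0" and sum_p: "(\<Sum>l\<in>UNIV. p l) = 1"
    and D: "D \<subseteq> fixset Y S" "\<And>u e. u \<in> fixset Y S \<Longrightarrow> e > 0 \<Longrightarrow> \<exists>d\<in>D. dist u d < e" "D \<noteq> {}"
    and conv: "\<And>d. d \<in> D \<Longrightarrow> convergent (\<lambda>k. weighted_sqnorm p (x k - d))"
    and res: "(\<lambda>k. S (x k) - x k) \<longlonglongrightarrow> 0"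
  shows "\<exists>u\<in>fixset Y S. x \<longlonglongrightarrow> u"
proof -
  obtain d where "d \<in> D" using D(3) by blast
  then have "bounded (range x)" by (intro bounded_if_convergent_weighted_sqnorm[OF p sum_p] conv)
  then obtain u r where r: "strict_mono r" and xr: "(x \<circ> r) \<longlonglongrightarrow> u"
    using bounded_imp_convergent_subsequence by blast
  have "u \<in> fixset Y S" by (rule fixpoint_if_asymptotically_regular[OF fne \<open>closed Y\<close> x res r xr])
  moreover have "x \<longlonglongrightarrow> u"
    using \<open>u \<in> fixset Y S\<close> D(2) conv
    by (intro tendsto_cluster_point_if_convergent_weighted_sqnorm[OF p sum_p r xr]) auto
  ultimately show ?thesis by blast
qed

section \<open>Random block-coordinate iteration\<close>

primrec block_iterate :: "('a^'i \<Rightarrow> 'a^'i) \<Rightarrow> 'a^'i \<Rightarrow> 'i::finite list \<Rightarrow> 'a^'i" where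
  "block_iterate S z0 [] = z0"
| "block_iterate S z0 (l # s) = S_hat S l (block_iterate S z0 s)"

primrec residual_sum :: "('a^'i \<Rightarrow> 'a^'i) \<Rightarrow> ('a::real_normed_vector)^'i \<Rightarrow> 'i::finite list \<Rightarrow> real" where
  "residual_sum S z0 [] = 0"
| "residual_sum S z0 (l # s) = residual_sum S z0 s + (norm (S (block_iterate S z0 s) - block_iterate S z0 s))\<^sup>2"

lemma residual_sum_nonneg: "residual_sum S z0 s \<ge> 0"
  by (induction s) auto

lemma block_iterate_in_prod_space:
  assumes "z0 \<in> prod_space V" and "\<And>z. z \<in> prod_space V \<Longrightarrow> S z \<in> prod_space V"
  shows "block_iterate S z0 s \<in> prod_space V"
  using assms by (induction s) (auto simp: prod_space_def S_hat_nth)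

lemma weighted_sqnorm_block_iterate_step:
  assumes p: "\<And>l. p l > 0" and sum_p: "(\<Sum>l\<in>UNIV. p l) = 1"
    and fne: "firmly_nonexpansive_on (prod_space V) S" and S_maps: "\<And>z. z \<in> prod_space V \<Longrightarrow> S z \<in> prod_space V"
    and z0: "z0 \<in> prod_space V" and d: "d \<in> fixset (prod_space V) S"
  shows "(\<Sum>l\<in>UNIV. p l * weighted_sqnorm p (block_iterate S z0 (l # s) - d))
    \<le> weighted_sqnorm p (block_iterate S z0 s - d) - (norm (S (block_iterate S z0 s) - block_iterate S z0 s))\<^sup>2"
proof -
  have "block_iterate S z0 s \<in> prod_space V" using z0 S_maps by (rule block_iterate_in_prod_space)
  then show ?thesis
    using expected_weighted_sqnorm_S_hat[OF p sum_p, of S "block_iterate S z0 s" d]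
      firmly_nonexpansive_fixpoint_ineq[OF fne _ d, of "block_iterate S z0 s"]
    by simp
qed

lemma nonneg_supermartingale_block_iterate:
  assumes p: "\<And>l. p l > 0" and sum_p: "(\<Sum>l\<in>UNIV. p l) = 1"
    and fne: "firmly_nonexpansive_on (prod_space V) S" and S_maps: "\<And>z. z \<in> prod_space V \<Longrightarrow> S z \<in> prod_space V"
    and z0: "z0 \<in> prod_space V" and d: "d \<in> fixset (prod_space V) S"
  shows "nonneg_supermartingale p (\<lambda>s. weighted_sqnorm p (block_iterate S z0 s - d))"
    and "nonneg_supermartingale p (\<lambda>s. weighted_sqnorm p (block_iterate S z0 s - d) + residual_sum S z0 s)"
proof -
  have nonneg: "0 \<le> weighted_sqnorm p (block_iterate S z0 s - d)" for s
    by (rule weighted_sqnorm_nonneg[OF p])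
  note step = weighted_sqnorm_block_iterate_step[OF assms]
  have "(\<Sum>l\<in>UNIV. p l * weighted_sqnorm p (block_iterate S z0 (l # s) - d))
    \<le> weighted_sqnorm p (block_iterate S z0 s - d)" for s
    using step[of s] zero_le_power2[of "norm (S (block_iterate S z0 s) - block_iterate S z0 s)"] by linarith
  with nonneg show "nonneg_supermartingale p (\<lambda>s. weighted_sqnorm p (block_iterate S z0 s - d))"
    by (simp add: nonneg_supermartingale_def)
  show "nonneg_supermartingale p (\<lambda>s. weighted_sqnorm p (block_iterate S z0 s - d) + residual_sum S z0 s)"
    unfolding nonneg_supermartingale_def
  proof (intro allI conjI)
    fix s
    show "0 \<le> weighted_sqnorm p (block_iterate S z0 s - d) + residual_sum S z0 s"
      using nonneg[of s] residual_sum_nonneg[of S z0 s] by simp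
    have "(\<Sum>l\<in>UNIV. p l * (weighted_sqnorm p (block_iterate S z0 (l # s) - d) + residual_sum S z0 (l # s)))
      = (\<Sum>l\<in>UNIV. p l * weighted_sqnorm p (block_iterate S z0 (l # s) - d))
        + residual_sum S z0 s + (norm (S (block_iterate S z0 s) - block_iterate S z0 s))\<^sup>2"
      by (simp add: distrib_left sum.distrib sum_distrib_right[symmetric] sum_p)
    with step[of s] show "(\<Sum>l\<in>UNIV. p l * (weighted_sqnorm p (block_iterate S z0 (l # s) - d)
        + residual_sum S z0 (l # s))) \<le> weighted_sqnorm p (block_iterate S z0 s - d) + residual_sum S z0 s"
      by linarith
  qed
qed

lemma tendsto_zero_if_convergent_sum_of_squares:
  fixes y :: "nat \<Rightarrow> 'b::real_normed_vector"
  assumes "\<And>k. r (Suc k) = r k + (norm (y k))\<^sup>2" and "convergent r"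
  shows "y \<longlonglongrightarrow> 0"
proof -
  obtain L where L: "r \<longlonglongrightarrow> L" using assms(2) by (auto simp: convergent_def)
  have "(\<lambda>k. r (Suc k) - r k) \<longlonglongrightarrow> L - L" by (intro tendsto_diff LIMSEQ_Suc L)
  then have "(\<lambda>k. sqrt ((norm (y k))\<^sup>2)) \<longlonglongrightarrow> sqrt 0" using assms(1) by (intro tendsto_real_sqrt) simp
  then show ?thesis by (simp add: tendsto_norm_zero_iff)
qed

context finite_iid_sequence
begin

lemma rbc_iter_eq_block_iterate: "rbc_iter S xi z0 k w = block_iterate S z0 (history k w)"
  by (induction k) auto

lemma rbc_iter_measurable: "(\<lambda>w. rbc_iter S xi z0 k w) \<in> borel_measurable M"
  unfolding rbc_iter_eq_block_iterate by (rule measurable_compose[OF history_measurable]) simp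

lemma AE_rbc_iter_tendsto_fixset:
  assumes subsp: "\<And>l. subspace (V l)"
    and S_maps: "\<And>z. z \<in> prod_space V \<Longrightarrow> S z \<in> prod_space V"
    and fne: "firmly_nonexpansive_on (prod_space V) S"
    and p: "\<And>l. p l > 0" and fixne: "fixset (prod_space V) S \<noteq> {}" and z0: "z0 \<in> prod_space V"
  shows "AE w in M. \<exists>u\<in>fixset (prod_space V) S. (\<lambda>k. rbc_iter S xi z0 k w) \<longlonglongrightarrow> u"
proof -
  let ?F = "fixset (prod_space V) S" and ?x = "\<lambda>w k. block_iterate S z0 (history k w)"
  obtain D where D: "countable D" "D \<subseteq> ?F" "\<And>u e. u \<in> ?F \<Longrightarrow> e > 0 \<Longrightarrow> \<exists>d\<in>D. dist u d < e"
    by (rule countable_dense_subset[of ?F]) (rule that)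
  obtain u0 where "u0 \<in> ?F" using fixne by blast
  then have "D \<noteq> {}" using D(3)[of u0 1] by auto
  note sm = nonneg_supermartingale_block_iterate[OF p sum_p fne S_maps z0]
  have "AE w in M. \<forall>d\<in>D. convergent (\<lambda>k. weighted_sqnorm p (?x w k - d))
      \<and> convergent (\<lambda>k. weighted_sqnorm p (?x w k - d) + residual_sum S z0 (history k w))"
    using D(1,2) by (subst AE_ball_countable) (auto intro!: AE_conjI AE_convergent_nonneg_supermartingale sm)
  then show ?thesis
  proof eventually_elim
    case (elim w)
    obtain d where "d \<in> D" using \<open>D \<noteq> {}\<close> by blast
    with elim have "convergent (\<lambda>k. (weighted_sqnorm p (?x w k - d) + residual_sum S z0 (history k w))
        - weighted_sqnorm p (?x w k - d))"
      by (intro convergent_diff) auto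
    then have "convergent (\<lambda>k. residual_sum S z0 (history k w))" by simp
    then have "(\<lambda>k. S (?x w k) - ?x w k) \<longlonglongrightarrow> 0"
      by (rule tendsto_zero_if_convergent_sum_of_squares[rotated]) simp
    then have "\<exists>u\<in>?F. ?x w \<longlonglongrightarrow> u"
      using elim D \<open>D \<noteq> {}\<close>
      by (intro tendsto_fixpoint_if_convergent_weighted_sqnorm[OF fne closed_prod_space[OF subsp]
          block_iterate_in_prod_space[OF z0 S_maps] p sum_p]) auto
    then show ?case by (simp add: rbc_iter_eq_block_iterate)
  qed
qed

end

theorem mainTheorem3:
  fixes V :: "'i::finite \<Rightarrow> ('a::euclidean_space) set"
    and S :: "'a^'i \<Rightarrow> 'a^'i"
    and M :: "'m measure"
    and xi :: "nat \<Rightarrow> 'm \<Rightarrow> 'i"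
    and z0 :: "'a^'i"
  assumes subsp: "\<And>l. subspace (V l)"
    and S_maps: "\<And>z. z \<in> prod_space V \<Longrightarrow> S z \<in> prod_space V"
    and fne: "firmly_nonexpansive_on (prod_space V) S"
    and P: "prob_space M"
    and rv: "\<And>k. k \<ge> 1 \<Longrightarrow> xi k \<in> measurable M (count_space UNIV)"
    and indep: "prob_space.indep_vars M (\<lambda>_. count_space UNIV) xi {1..}"
    and ident: "\<And>k. k \<ge> 1 \<Longrightarrow> distr M (count_space UNIV) (xi k) = distr M (count_space UNIV) (xi 1)"
    and pos: "\<And>l. measure M {w \<in> space M. xi 1 w = l} > 0"
    and fixne: "fixset (prod_space V) S \<noteq> {}"
    and z0: "z0 \<in> prod_space V"
  shows "\<exists>Z. Z \<in> borel_measurable M \<and> (\<forall>w\<in>space M. Z w \<in> fixset (prod_space V) S) \<and>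
           (AE w in M. (\<lambda>k. rbc_iter S xi z0 k w) \<longlonglongrightarrow> Z w)"
proof -
  interpret finite_iid_sequence M xi
    using P rv indep ident by (intro finite_iid_sequence.intro finite_iid_sequence_axioms.intro)
  have "\<And>l. p l > 0" using pos by (simp add: p_def)
  with fixne obtain u0 where "u0 \<in> fixset (prod_space V) S"
    and "AE w in M. \<exists>u\<in>fixset (prod_space V) S. (\<lambda>k. rbc_iter S xi z0 k w) \<longlonglongrightarrow> u"
    using AE_rbc_iter_tendsto_fixset[OF subsp S_maps fne] z0 by blast
  then show ?thesis by (intro measurable_limit_in_set rbc_iter_measurable)
qed

end
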